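(* Let $s,t,p\ge 1$, $A,B\in GL(n)$ and $Q\in\mathcal{P}(n)$ with $k=\lambda_1(Q)>1$. Put $\tilde k=\lambda_n(Q)$, $q=\min\{t/s,p/s\}$ and $\tilde q=\max\{t/s,p/s\}$. If $$\|A\|^2+\|B\|^2<\frac{q^{\tilde q}\,\tilde k^{\tilde q+1}}{k^{\tilde q}(q+1)^{\tilde q+1}},$$ then the equation $X^s+A^*X^{-t}A+B^*X^{-p}B=Q$ has a Hermitian positive definite solution in $\big[\big(\tfrac{q\tilde k}{k(q+1)}\big)^{1/s}I,\;Q^{1/s}\big]$.
   Context: $GL(n)$: $n\times n$ complex nonsingular matrices; $\mathcal{P}(n)$: $n\times n$ Hermitian positive definite matrices. For Hermitian $M$, $\lambda_1(M)$ and $\lambda_n(M)$ are its largest and smallest eigenvalues. $\|\cdot\|$ is the spectral norm. For Hermitian $P,R$, $P\le R$ means $R-P$ is positive semidefinite, and $[P,R]=\{X \text{ Hermitian}: P\le X\le R\}$. Real powers of positive definite matrices are defined by functional calculus. *)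

theory Defs
  imports "HOL-Analysis.Analysis"
begin

definition adj :: "complex^'n^'m \<Rightarrow> complex^'m^'n" where
  "adj A = (\<chi> i j. cnj (A $ j $ i))"

definition hermitian :: "complex^'n^'n \<Rightarrow> bool" where
  "hermitian M \<longleftrightarrow> adj M = M"

definition qform :: "complex^'n^'n \<Rightarrow> complex^'n \<Rightarrow> complex" where
  "qform M x = (\<Sum>i\<in>UNIV. cnj (x $ i) * (M *v x) $ i)"

definition pos_def :: "complex^'n^'n \<Rightarrow> bool" where
  "pos_def M \<longleftrightarrow> hermitian M \<and> (\<forall>x. x \<noteq> 0 \<longrightarrow> Re (qform M x) > 0)"

definition pos_semidef :: "complex^'n^'n \<Rightarrow> bool" where
  "pos_semidef M \<longleftrightarrow> hermitian M \<and> (\<forall>x. Re (qform M x) \<ge> 0)"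

definition loewner_le :: "complex^'n^'n \<Rightarrow> complex^'n^'n \<Rightarrow> bool" where
  "loewner_le P R \<longleftrightarrow> pos_semidef (R - P)"

definition eigenvalues :: "complex^'n^'n \<Rightarrow> real set" where
  "eigenvalues M = {c. \<exists>x. x \<noteq> 0 \<and> M *v x = complex_of_real c *s x}"

definition lambda_max :: "complex^'n^'n \<Rightarrow> real" where
  "lambda_max M = Max (eigenvalues M)"

definition lambda_min :: "complex^'n^'n \<Rightarrow> real" where
  "lambda_min M = Min (eigenvalues M)"

definition spec_norm :: "complex^'n^'m \<Rightarrow> real" where
  "spec_norm A = onorm (\<lambda>x. A *v x)"

definition unitary :: "complex^'n^'n \<Rightarrow> bool" where
  "unitary U \<longleftrightarrow> U ** adj U = mat 1 \<and> adj U ** U = mat 1"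

definition diag_mat :: "('n \<Rightarrow> real) \<Rightarrow> complex^'n^'n" where
  "diag_mat d = (\<chi> i j. if i = j then complex_of_real (d i) else 0)"

definition mpow :: "complex^'n^'n \<Rightarrow> real \<Rightarrow> complex^'n^'n" where
  "mpow M r = (SOME N. \<exists>U d. unitary U \<and> (\<forall>i. d i > 0) \<and>
      M = U ** diag_mat d ** adj U \<and> N = U ** diag_mat (\<lambda>i. d i powr r) ** adj U)"

end

theory Submission
  imports Defs
begin

(* Substituting Y = X^s turns the equation into the fixed-point problem Y = F Y with
   F Y = Q - A^* Y^(-t/s) A - B^* Y^(-p/s) B.  Let c = q k'/(k (q+1)) and let K be the
   compact convex set of Hermitian Y with c I <= Y <= Q.  For Y in K we have Y^(-a) <= c^(-a) I,
   and the hypothesis on |A|^2 + |B|^2 is exactly what makes F Y >= c I; trivially F Y <= Q.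
   The functional calculus is continuous (Stone-Weierstrass), so Brouwer's theorem gives a fixed
   point Y in K, and X = Y^(1/s) solves the equation.  The bound X <= Q^(1/s) is the
   Loewner-Heinz inequality, which follows from z^r = C_r * integral of l^(r-1) z/(z+l) dl
   and the antitonicity of Y |-> (Y + l I)^(-1). *)

definition cinner :: "complex^'n \<Rightarrow> complex^'n \<Rightarrow> complex" where
  "cinner x y = (\<Sum>i\<in>UNIV. cnj (x $ i) * y $ i)"

lemma qform_cinner: "qform M x = cinner x (M *v x)"
  by (simp add: qform_def cinner_def)

lemma scaleR_mat_nth: "(c *\<^sub>R (A::complex^'n^'m)) $ i $ j = of_real c * A $ i $ j"
  unfolding vector_scaleR_component by (rule scaleR_conv_of_real)

lemma scaleR_vec_nth: "(c *\<^sub>R (x::complex^'n)) $ i = of_real c * x $ i"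
  unfolding vector_scaleR_component by (rule scaleR_conv_of_real)

lemma adj_adj [simp]: "adj (adj A) = A"
  by (simp add: adj_def vec_eq_iff)

lemma adj_mult: "adj (A ** B) = adj B ** adj A"
  by (simp add: adj_def vec_eq_iff matrix_matrix_mult_def mult.commute)

lemma adj_add: "adj (A + B) = adj A + adj B"
  by (simp add: adj_def vec_eq_iff)

lemma adj_diff: "adj (A - B) = adj A - adj B"
  by (simp add: adj_def vec_eq_iff)

lemma adj_scaleR: "adj (c *\<^sub>R A) = c *\<^sub>R adj A"
  by (simp add: adj_def vec_eq_iff scaleR_mat_nth)

lemma cinner_adj: "cinner x (A *v y) = cinner (adj A *v x) y"
proof -
  have "cinner x (A *v y) = (\<Sum>i\<in>UNIV. \<Sum>j\<in>UNIV. cnj (x$i) * (A$i$j * y$j))"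
    by (simp add: cinner_def matrix_vector_mult_def sum_distrib_left)
  also have "\<dots> = (\<Sum>j\<in>UNIV. \<Sum>i\<in>UNIV. cnj (x$i) * (A$i$j * y$j))"
    by (rule sum.swap)
  also have "\<dots> = cinner (adj A *v x) y"
    by (simp add: cinner_def matrix_vector_mult_def adj_def sum_distrib_right sum_distrib_left mult_ac)
  finally show ?thesis .
qed

lemma cinner_commute: "cinner y x = cnj (cinner x y)"
  by (simp add: cinner_def mult.commute)

lemma cinner_zero_right [simp]: "cinner x 0 = 0"
  by (simp add: cinner_def)

lemma cinner_add_right: "cinner x (y + z) = cinner x y + cinner x z"
  by (simp add: cinner_def algebra_simps sum.distrib)

lemma cinner_diff_right: "cinner x (y - z) = cinner x y - cinner x z"
  by (simp add: cinner_def algebra_simps sum_subtractf)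

lemma cinner_add_left: "cinner (y + z) x = cinner y x + cinner z x"
  by (simp add: cinner_def algebra_simps sum.distrib)

lemma cinner_diff_left: "cinner (y - z) x = cinner y x - cinner z x"
  by (simp add: cinner_def algebra_simps sum_subtractf)

lemma cinner_scale_left: "cinner (c *s y) x = cnj c * cinner y x"
  by (simp add: cinner_def algebra_simps sum_distrib_left)

lemma cinner_scaleR_right: "cinner x (c *\<^sub>R y) = of_real c * cinner x y"
  unfolding cinner_def scaleR_vec_nth by (simp add: sum_distrib_left mult_ac)

lemma cinner_scaleR_left: "cinner (c *\<^sub>R y) x = of_real c * cinner y x"
  unfolding cinner_def scaleR_vec_nth by (simp add: sum_distrib_left mult_ac)

lemma norm_vec_sq: "(norm (x::complex^'n))\<^sup>2 = (\<Sum>i\<in>UNIV. (norm (x $ i))\<^sup>2)"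
  by (simp add: norm_vec_def L2_set_def sum_nonneg)

lemma cinner_self: "cinner x x = of_real ((norm x)\<^sup>2)"
  unfolding cinner_def norm_vec_sq of_real_sum
  by (intro sum.cong refl) (simp add: complex_norm_square[symmetric] mult.commute)

lemma hermitian_cinner: "hermitian H \<Longrightarrow> cinner x (H *v y) = cinner (H *v x) y"
  by (metis cinner_adj hermitian_def)

lemma qform_add: "qform (M + N) x = qform M x + qform N x"
  by (simp add: qform_cinner matrix_vector_mult_add_rdistrib cinner_add_right)

lemma qform_diff: "qform (M - N) x = qform M x - qform N x"
  by (simp add: qform_cinner matrix_vector_mult_diff_rdistrib cinner_diff_right)

lemma scaleR_matrix_vector_mult: "(c *\<^sub>R M) *v x = c *\<^sub>R (M *v (x::complex^'n))"
  by (simp add: vec_eq_iff matrix_vector_mult_def scaleR_mat_nth scaleR_vec_nth sum_distrib_left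
      mult_ac scaleR_sum_right)

lemma qform_scaleR: "qform (c *\<^sub>R M) x = of_real c * qform M x"
  by (simp add: qform_cinner scaleR_matrix_vector_mult cinner_scaleR_right)

lemma matrix_vector_scaleR_commute: "(M::complex^'n^'m) *v (c *\<^sub>R x) = c *\<^sub>R (M *v x)"
  using linear_iff matrix_vector_mul_linear by blast

lemma qform_scaleR_vec: "qform M (c *\<^sub>R y) = of_real (c\<^sup>2) * qform M y"
  by (simp add: qform_cinner cinner_scaleR_left cinner_scaleR_right power2_eq_square
      matrix_vector_scaleR_commute)

lemma qform_id: "qform (mat 1) x = of_real ((norm x)\<^sup>2)"
  by (simp add: qform_cinner cinner_self)

lemma Re_qform_scaleR_id: "Re (qform (c *\<^sub>R mat 1) x) = c * (norm x)\<^sup>2"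
  by (simp add: qform_scaleR qform_id)

lemma qform_conj: "qform (adj A ** P ** A) x = qform P (A *v x)"
  by (simp add: qform_cinner matrix_vector_mul_assoc[symmetric] cinner_adj)

lemma loewner_le_iff:
  "loewner_le P R \<longleftrightarrow> hermitian (R - P) \<and> (\<forall>x. Re (qform P x) \<le> Re (qform R x))"
  by (simp add: loewner_le_def pos_semidef_def qform_diff)

lemma hermitian_conj: "hermitian P \<Longrightarrow> hermitian (adj A ** P ** A)"
  by (simp add: hermitian_def adj_mult matrix_mul_assoc)

lemma hermitian_add: "hermitian P \<Longrightarrow> hermitian R \<Longrightarrow> hermitian (P + R)"
  by (simp add: hermitian_def adj_add)

lemma hermitian_diff: "hermitian P \<Longrightarrow> hermitian R \<Longrightarrow> hermitian (P - R)"
  by (simp add: hermitian_def adj_diff)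

lemma hermitian_scaleR: "hermitian P \<Longrightarrow> hermitian (c *\<^sub>R P)"
  by (simp add: hermitian_def adj_scaleR)

lemma hermitian_scaleR_id: "hermitian (c *\<^sub>R mat 1)"
  by (simp add: hermitian_def adj_scaleR adj_def vec_eq_iff mat_def)

lemma spec_norm_bound: "norm ((A::complex^'n^'m) *v x) \<le> spec_norm A * norm x"
  unfolding spec_norm_def
  by (rule onorm) (simp add: linear_conv_bounded_linear matrix_vector_mul_linear)

lemma diag_mat_mult_vec: "diag_mat d *v x = (\<chi> i. of_real (d i) * x $ i)"
  by (simp add: diag_mat_def matrix_vector_mult_def vec_eq_iff if_distrib if_distribR cong: if_cong)

lemma matrix_mult_diag_nth: "(W ** diag_mat d) $ i $ j = W $ i $ j * of_real (d j)"
proof -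
  have "(W ** diag_mat d) $ i $ j = (\<Sum>k\<in>UNIV. if k = j then W $ i $ j * of_real (d j) else 0)"
    unfolding matrix_matrix_mult_def diag_mat_def by (simp add: if_distrib if_distribR cong: if_cong)
  then show ?thesis by simp
qed

lemma diag_mult_matrix_nth: "(diag_mat d ** W) $ i $ j = of_real (d i) * W $ i $ j"
proof -
  have "(diag_mat d ** W) $ i $ j = (\<Sum>k\<in>UNIV. (if i = k then of_real (d i) else 0) * W $ k $ j)"
    unfolding matrix_matrix_mult_def diag_mat_def by simp
  also have "\<dots> = (\<Sum>k\<in>UNIV. if k = i then of_real (d i) * W $ i $ j else 0)"
    by (rule sum.cong) auto
  finally show ?thesis by simp
qed

lemma diag_mat_mult: "diag_mat d ** diag_mat e = diag_mat (\<lambda>i. d i * e i)"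
  unfolding vec_eq_iff diag_mult_matrix_nth by (simp add: diag_mat_def)

lemma diag_mat_add: "diag_mat (\<lambda>i. d i + e i) = diag_mat d + diag_mat e"
  by (simp add: diag_mat_def vec_eq_iff)

lemma diag_mat_diff: "diag_mat (\<lambda>i. d i - e i) = diag_mat d - diag_mat e"
  by (simp add: diag_mat_def vec_eq_iff)

lemma diag_mat_const: "diag_mat (\<lambda>i. c) = c *\<^sub>R mat 1"
  unfolding vec_eq_iff scaleR_mat_nth by (simp add: diag_mat_def mat_def)

lemma cinner_diag_mat: "cinner w (diag_mat d *v w) = of_real (\<Sum>k\<in>UNIV. d k * (norm (w $ k))\<^sup>2)"
  unfolding cinner_def diag_mat_mult_vec of_real_sum
  by (intro sum.cong refl) (simp add: mult_ac flip: complex_norm_square)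

lemma unitary_cancel:
  assumes "unitary U"
  shows "adj U ** (U ** X) = X" "U ** (adj U ** X) = X" "adj U ** U = mat 1" "U ** adj U = mat 1"
  using assms by (simp_all add: unitary_def matrix_mul_assoc)

lemma unitary_adj_norm: "unitary U \<Longrightarrow> norm (adj U *v x) = norm x"
proof -
  assume "unitary U"
  then have "cinner (adj U *v x) (adj U *v x) = cinner x x"
    by (simp add: cinner_adj[symmetric] unitary_def matrix_vector_mul_assoc)
  then have "(norm (adj U *v x))\<^sup>2 = (norm x)\<^sup>2"
    by (simp only: cinner_self of_real_eq_iff)
  then show ?thesis by (simp add: power2_eq_iff_nonneg)
qed

lemma unitary_adj_column: "unitary U \<Longrightarrow> adj U *v column k U = axis k 1"
proof -
  assume U: "unitary U"
  have "adj U *v column k U = adj U *v (U *v axis k 1)"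
    by (simp add: vec_eq_iff matrix_vector_mult_def axis_def column_def if_distrib if_distribR
        cong: if_cong)
  also have "\<dots> = axis k 1"
    using U by (simp add: matrix_vector_mul_assoc unitary_def)
  finally show ?thesis .
qed

lemma unitary_column_norm:
  fixes U :: "complex^'n^'n"
  assumes U: "unitary U"
  shows "norm (column k U) = 1"
proof -
  have "(norm (axis k (1::complex) :: complex^'n))\<^sup>2 = (\<Sum>j\<in>UNIV. if j = k then 1 else 0)"
    unfolding norm_vec_sq by (rule sum.cong) (auto simp: axis_def)
  then show ?thesis
    using unitary_adj_norm[OF U, of "column k U"] unitary_adj_column[OF U, of k] by simp
qed

lemma unitary_entry_norm_le: "unitary U \<Longrightarrow> norm (U $ i $ k) \<le> 1"
  using Finite_Cartesian_Product.norm_nth_le[of "column k U" i] unitary_column_norm[of U k]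
  by (simp add: column_def)

lemma Re_qform_unitary_diag:
  assumes "unitary U"
  shows "Re (qform (U ** diag_mat d ** adj U) x) = (\<Sum>k\<in>UNIV. d k * (norm ((adj U *v x) $ k))\<^sup>2)"
proof -
  have "qform (U ** diag_mat d ** adj U) x = cinner (adj U *v x) (diag_mat d *v (adj U *v x))"
    by (simp add: qform_cinner matrix_vector_mul_assoc[symmetric] cinner_adj)
  then show ?thesis by (simp add: cinner_diag_mat)
qed

lemma Re_qform_unitary_diag_column:
  "unitary U \<Longrightarrow> Re (qform (U ** diag_mat d ** adj U) (column k U)) = d k"
  by (simp add: Re_qform_unitary_diag unitary_adj_column axis_def if_distrib if_distribR
      cong: if_cong)

lemma sum_norm_adj_unitary: "unitary U \<Longrightarrow> (\<Sum>k\<in>UNIV. (norm ((adj U *v x) $ k))\<^sup>2) = (norm x)\<^sup>2"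
  by (simp add: norm_vec_sq[symmetric] unitary_adj_norm)

lemma adj_diag_mat [simp]: "adj (diag_mat d) = diag_mat d"
  by (simp add: adj_def vec_eq_iff diag_mat_def)

lemma hermitian_unitary_diag: "hermitian (U ** diag_mat d ** adj U)"
  by (simp add: hermitian_def adj_mult matrix_mul_assoc)

section \<open>The spectral theorem\<close>

lemma exists_nonzero_orthogonal:
  fixes v :: "'n \<Rightarrow> complex^'n"
  assumes "i \<notin> S"
  shows "\<exists>x. x \<noteq> 0 \<and> (\<forall>j\<in>S. cinner (v j) x = 0)"
proof -
  \<comment> \<open>the rows \<open>v j\<^sup>*\<close> (\<open>j \<in> S\<close>) and a zero row \<open>i\<close> form a singular matrix\<close>
  define M :: "complex^'n^'n" where "M = (\<chi> a. if a \<in> S then (\<chi> b. cnj (v a $ b)) else 0)"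
  have "\<not> (\<exists>B. B ** M = mat 1)"
  proof
    assume "\<exists>B. B ** M = mat 1"
    then obtain B where "M ** B = mat 1" using matrix_left_right_inverse by blast
    then have "(M ** B) $ i $ i = 1" by (simp add: mat_def)
    moreover have "(M ** B) $ i $ i = 0" using assms by (simp add: M_def matrix_matrix_mult_def)
    ultimately show False by simp
  qed
  then obtain x where x: "M *v x = 0" "x \<noteq> 0" using matrix_left_invertible_ker[of M] by auto
  have "cinner (v j) x = 0" if "j \<in> S" for j
    using that arg_cong[OF x(1), of "\<lambda>y. y $ j"]
    by (simp add: M_def matrix_vector_mult_def cinner_def)
  then show ?thesis using x by blast
qed

lemma quadratic_nonpos_imp_zero:
  fixes a b :: real
  assumes "a \<ge> 0" and nonpos: "\<And>e. 2 * e * a + e\<^sup>2 * b \<le> 0"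
  shows "a = 0"
proof (cases "b \<ge> 0")
  case True
  then show ?thesis using nonpos[of 1] \<open>a \<ge> 0\<close> by simp
next
  case False
  have "2 * (a / - b) * a + (a / - b)\<^sup>2 * b = a\<^sup>2 / - b"
    using False by (simp add: field_simps power2_eq_square)
  then have "a\<^sup>2 / - b \<le> 0" using nonpos[of "a / - b"] by simp
  then have "a\<^sup>2 \<le> 0" using False mult_right_mono[of "a\<^sup>2 / - b" 0 "- b"] by simp
  then show ?thesis by simp
qed

text \<open>\<open>z = (H - m I) u\<close> lies in \<open>W\<close>, and moving \<open>u\<close> in direction \<open>z\<close> would raise the
  Rayleigh quotient above its maximum \<open>m\<close> unless \<open>z = 0\<close>.\<close>

lemma rayleigh_maximiser_eigenvector:
  fixes H :: "complex^'n^'n"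
  assumes herm: "hermitian H" and W: "subspace W" and HW: "\<And>y. y \<in> W \<Longrightarrow> H *v y \<in> W"
    and u: "u \<in> W" "norm u = 1"
    and max: "\<And>y. y \<in> W \<Longrightarrow> Re (qform H y) \<le> Re (qform H u) * (norm y)\<^sup>2"
  shows "H *v u = Re (qform H u) *\<^sub>R u"
proof -
  define m where "m = Re (qform H u)"
  define R where "R = H - m *\<^sub>R mat 1"
  have hermR: "hermitian R" unfolding R_def by (intro hermitian_diff herm hermitian_scaleR_id)
  have Rv: "R *v y = H *v y - m *\<^sub>R y" for y
    by (simp add: R_def matrix_vector_mult_diff_rdistrib scaleR_matrix_vector_mult)
  have qR: "Re (qform R y) = Re (qform H y) - m * (norm y)\<^sup>2" for y
    by (simp add: R_def qform_diff Re_qform_scaleR_id)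
  define z where "z = R *v u"
  have zW: "z \<in> W" unfolding z_def Rv
    using u(1) by (intro subspace_diff[OF W] subspace_scale[OF W] HW)
  have expand: "Re (qform R (u + e *\<^sub>R z)) = 2 * e * (norm z)\<^sup>2 + e\<^sup>2 * Re (qform R z)" for e
  proof -
    have "cinner u (R *v z) = cinner z z"
      using hermitian_cinner[OF hermR] z_def by simp
    moreover have "Re (qform R u) = 0" using qR[of u] u(2) by (simp add: m_def)
    ultimately show ?thesis
      by (simp add: qform_cinner z_def matrix_vector_right_distrib matrix_vector_scaleR_commute
          cinner_add_left cinner_add_right cinner_scaleR_left cinner_scaleR_right cinner_self
          algebra_simps power2_eq_square)
  qed
  have "2 * e * (norm z)\<^sup>2 + e\<^sup>2 * Re (qform R z) \<le> 0" for e
  proof -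
    have "u + e *\<^sub>R z \<in> W" using u(1) zW by (intro subspace_add[OF W] subspace_scale[OF W])
    then show ?thesis using max qR[of "u + e *\<^sub>R z"] expand[of e] by (simp add: m_def)
  qed
  then have "(norm z)\<^sup>2 = 0" by (intro quadratic_nonpos_imp_zero) auto
  then show ?thesis using Rv[of u] by (simp add: z_def m_def)
qed

lemma rayleigh_maximiser_exists:
  fixes H :: "complex^'n^'n"
  assumes W: "subspace W" and "x \<in> W" "x \<noteq> 0"
  obtains u where "u \<in> W" "norm u = 1"
    "\<And>y. y \<in> W \<Longrightarrow> Re (qform H y) \<le> Re (qform H u) * (norm y)\<^sup>2"
proof -
  define T where "T = sphere 0 1 \<inter> W"
  have "compact T"
    unfolding T_def by (intro compact_Int_closed compact_sphere closed_subspace W)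
  moreover have "(1 / norm x) *\<^sub>R x \<in> T" using assms subspace_scale[OF W] by (simp add: T_def)
  moreover have "continuous_on T (\<lambda>y. Re (qform H y))"
    unfolding qform_def matrix_vector_mult_def by (intro continuous_intros)
  ultimately obtain u where uT: "u \<in> T" and umax: "\<forall>y\<in>T. Re (qform H y) \<le> Re (qform H u)"
    using continuous_attains_sup by blast
  have "Re (qform H y) \<le> Re (qform H u) * (norm y)\<^sup>2" if "y \<in> W" for y
  proof (cases "y = 0")
    case True
    then show ?thesis by (simp add: qform_def)
  next
    case False
    then have "(1 / norm y) *\<^sub>R y \<in> T" using that subspace_scale[OF W] by (simp add: T_def)
    then have "(1 / norm y)\<^sup>2 * Re (qform H y) \<le> Re (qform H u)"
      using umax by (fastforce simp: qform_scaleR_vec)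
    then show ?thesis using False by (simp add: field_simps power2_eq_square)
  qed
  then show ?thesis using that uT by (auto simp: T_def)
qed

lemma orthogonal_eigenvector_exists:
  fixes H :: "complex^'n^'n" and v :: "'n \<Rightarrow> complex^'n"
  assumes herm: "hermitian H" and "i \<notin> S"
    and eig: "\<forall>j\<in>S. \<exists>m::real. H *v v j = of_real m *s v j"
  shows "\<exists>u m. norm u = 1 \<and> (\<forall>j\<in>S. cinner (v j) u = 0) \<and> H *v u = of_real m *s u"
proof -
  define W where "W = {y. \<forall>j\<in>S. cinner (v j) y = 0}"
  have W: "subspace W"
    by (auto simp: subspace_def W_def cinner_add_right cinner_scaleR_right)
  have HW: "H *v y \<in> W" if "y \<in> W" for y
  proof -
    have "cinner (v j) (H *v y) = 0" if "j \<in> S" for j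
    proof -
      obtain mj where "H *v v j = of_real mj *s v j" using eig \<open>j \<in> S\<close> by blast
      then have "cinner (v j) (H *v y) = of_real mj * cinner (v j) y"
        by (simp add: hermitian_cinner[OF herm] cinner_scale_left)
      then show ?thesis using \<open>y \<in> W\<close> \<open>j \<in> S\<close> by (simp add: W_def)
    qed
    then show ?thesis by (simp add: W_def)
  qed
  obtain x where "x \<in> W" "x \<noteq> 0" using exists_nonzero_orthogonal[OF \<open>i \<notin> S\<close>, of v] W_def by blast
  then obtain u where u: "u \<in> W" "norm u = 1"
    and max: "\<And>y. y \<in> W \<Longrightarrow> Re (qform H y) \<le> Re (qform H u) * (norm y)\<^sup>2"
    using rayleigh_maximiser_exists[OF W] by blast
  have "H *v u = Re (qform H u) *\<^sub>R u"
    using rayleigh_maximiser_eigenvector[OF herm W HW u max] by blast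
  then have "H *v u = of_real (Re (qform H u)) *s u"
    unfolding vec_eq_iff scaleR_vec_nth by simp
  then show ?thesis using u W_def by blast
qed

lemma orthonormal_eigenvectors:
  fixes H :: "complex^'n^'n" and S :: "'n set"
  assumes herm: "hermitian H" and "finite S"
  shows "\<exists>v m. (\<forall>i\<in>S. \<forall>j\<in>S. cinner (v i) (v j) = (if i = j then 1 else 0))
              \<and> (\<forall>i\<in>S. H *v v i = of_real (m i) *s v i)"
  using \<open>finite S\<close>
proof (induction S rule: finite_induct)
  case empty
  then show ?case by simp
next
  case (insert i S)
  then obtain v m where vo: "\<forall>a\<in>S. \<forall>b\<in>S. cinner (v a) (v b) = (if a = b then 1 else 0)"
    and ve: "\<forall>a\<in>S. H *v v a = of_real (m a) *s v a" by blast
  obtain u mu where u: "norm u = 1" "\<forall>j\<in>S. cinner (v j) u = 0" "H *v u = of_real mu *s u"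
    using orthogonal_eigenvector_exists[OF herm insert(2), of v] ve by blast
  have "cinner u u = 1" using u(1) by (simp add: cinner_self)
  moreover have "\<forall>j\<in>S. cinner u (v j) = 0" using u(2) by (metis cinner_commute complex_cnj_zero)
  ultimately show ?case
    using vo ve u insert(2) by (intro exI[of _ "v(i := u)"] exI[of _ "m(i := mu)"]) auto
qed

theorem spectral_theorem:
  fixes H :: "complex^'n^'n"
  assumes "hermitian H"
  shows "\<exists>U d. unitary U \<and> H = U ** diag_mat d ** adj U"
proof -
  obtain v :: "'n \<Rightarrow> complex^'n" and m :: "'n \<Rightarrow> real"
    where vo: "\<forall>a b. cinner (v a) (v b) = (if a = b then 1 else 0)"
      and ve: "\<forall>a. H *v v a = of_real (m a) *s v a"
    using orthonormal_eigenvectors[OF assms, of UNIV] by auto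
  define U :: "complex^'n^'n" where "U = (\<chi> a b. v b $ a)"
  have "(adj U ** U) $ a $ b = cinner (v a) (v b)" for a b
    by (simp add: U_def adj_def matrix_matrix_mult_def cinner_def)
  then have "adj U ** U = mat 1" using vo by (simp add: vec_eq_iff mat_def)
  then have U: "unitary U" using matrix_left_right_inverse unitary_def by blast
  have "H ** U = U ** diag_mat m"
    using ve by (simp add: vec_eq_iff U_def matrix_matrix_mult_def matrix_vector_mult_def
        diag_mat_def if_distrib if_distribR cong: if_cong)
  then have "H = U ** diag_mat m ** adj U"
    using U by (metis matrix_mul_assoc matrix_mul_rid unitary_def)
  then show ?thesis using U by blast
qed

lemma matrix_add_rdistrib: "((B::complex^'n^'m) + C) ** A = B ** A + C ** A"
  by (simp add: matrix_matrix_mult_def vec_eq_iff distrib_right sum.distrib)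

lemma matrix_diff_rdistrib: "((B::complex^'n^'m) - C) ** A = B ** A - C ** A"
  by (simp add: matrix_matrix_mult_def vec_eq_iff left_diff_distrib sum_subtractf)

lemma matrix_diff_ldistrib: "(A::complex^'n^'m) ** (B - C) = A ** B - A ** C"
  by (simp add: matrix_matrix_mult_def vec_eq_iff right_diff_distrib sum_subtractf)

lemma unitary_diag_mult:
  "unitary U \<Longrightarrow>
    (U ** diag_mat d ** adj U) ** (U ** diag_mat e ** adj U) = U ** diag_mat (\<lambda>i. d i * e i) ** adj U"
  by (simp add: matrix_mul_assoc[symmetric] unitary_cancel diag_mat_mult[symmetric])

lemma unitary_diag_add:
  "U ** diag_mat d ** adj U + U ** diag_mat e ** adj U = U ** diag_mat (\<lambda>i. d i + e i) ** adj U"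
  by (simp add: diag_mat_add matrix_add_ldistrib matrix_add_rdistrib)

lemma unitary_diag_diff:
  "U ** diag_mat d ** adj U - U ** diag_mat e ** adj U = U ** diag_mat (\<lambda>i. d i - e i) ** adj U"
  by (simp add: diag_mat_diff matrix_diff_ldistrib matrix_diff_rdistrib)

lemma unitary_diag_const: "unitary U \<Longrightarrow> U ** diag_mat (\<lambda>i. c) ** adj U = c *\<^sub>R mat 1"
  by (simp add: diag_mat_const matrix_scalar_ac scalar_matrix_assoc[symmetric] unitary_def)

lemma qform_ge_of_unitary_diag_ge:
  assumes U: "unitary U" and "\<forall>i. m \<le> d i"
  shows "m * (norm x)\<^sup>2 \<le> Re (qform (U ** diag_mat d ** adj U) x)"
proof -
  have "m * (norm x)\<^sup>2 = (\<Sum>k\<in>UNIV. m * (norm ((adj U *v x) $ k))\<^sup>2)"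
    by (simp add: sum_distrib_left[symmetric] sum_norm_adj_unitary[OF U])
  also have "\<dots> \<le> (\<Sum>k\<in>UNIV. d k * (norm ((adj U *v x) $ k))\<^sup>2)"
    using assms(2) by (intro sum_mono mult_right_mono) auto
  finally show ?thesis by (simp add: Re_qform_unitary_diag[OF U])
qed

lemma qform_le_of_unitary_diag_le:
  assumes U: "unitary U" and "\<forall>i. d i \<le> M"
  shows "Re (qform (U ** diag_mat d ** adj U) x) \<le> M * (norm x)\<^sup>2"
proof -
  have "(\<Sum>k\<in>UNIV. d k * (norm ((adj U *v x) $ k))\<^sup>2) \<le> (\<Sum>k\<in>UNIV. M * (norm ((adj U *v x) $ k))\<^sup>2)"
    using assms(2) by (intro sum_mono mult_right_mono) auto
  also have "\<dots> = M * (norm x)\<^sup>2"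
    by (simp add: sum_distrib_left[symmetric] sum_norm_adj_unitary[OF U])
  finally show ?thesis by (simp add: Re_qform_unitary_diag[OF U])
qed

lemma unitary_diag_ge_of_qform_ge:
  assumes "unitary U" and "\<forall>x. m * (norm x)\<^sup>2 \<le> Re (qform (U ** diag_mat d ** adj U) x)"
  shows "m \<le> d i"
  using assms(2)[rule_format, of "column i U"] assms(1)
  by (simp add: Re_qform_unitary_diag_column unitary_column_norm)

lemma unitary_diag_le_of_qform_le:
  assumes "unitary U" and "\<forall>x. Re (qform (U ** diag_mat d ** adj U) x) \<le> M * (norm x)\<^sup>2"
  shows "d i \<le> M"
  using assms(2)[rule_format, of "column i U"] assms(1)
  by (simp add: Re_qform_unitary_diag_column unitary_column_norm)

lemma unitary_diag_pos_def:
  assumes U: "unitary U" and d: "\<forall>i. d i > 0"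
  shows "pos_def (U ** diag_mat d ** adj U)"
  unfolding pos_def_def
proof (intro conjI allI impI)
  show "hermitian (U ** diag_mat d ** adj U)" by (rule hermitian_unitary_diag)
  fix x :: "complex^'a" assume "x \<noteq> 0"
  then have "adj U *v x \<noteq> 0" using unitary_adj_norm[OF U, of x] by (metis norm_eq_zero)
  then obtain j where j: "(adj U *v x) $ j \<noteq> 0" by (auto simp: vec_eq_iff)
  have "(\<Sum>k\<in>UNIV. d k * (norm ((adj U *v x) $ k))\<^sup>2) > 0"
    using j d by (intro sum_pos2[of UNIV j]) (auto intro!: mult_nonneg_nonneg simp: less_imp_le)
  then show "Re (qform (U ** diag_mat d ** adj U) x) > 0" by (simp add: Re_qform_unitary_diag[OF U])
qed

lemma pos_def_unitary_diag:
  assumes "pos_def M"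
  obtains U d where "unitary U" "\<forall>i. d i > 0" "M = U ** diag_mat d ** adj U"
proof -
  obtain U d where U: "unitary U" "M = U ** diag_mat d ** adj U"
    using spectral_theorem assms pos_def_def by blast
  have "d i > 0" for i
  proof -
    have "column i U \<noteq> 0" using unitary_column_norm[OF U(1), of i] by auto
    then have "Re (qform M (column i U)) > 0" using assms by (simp add: pos_def_def)
    then show ?thesis using Re_qform_unitary_diag_column[OF U(1)] U(2) by simp
  qed
  then show ?thesis using U that by blast
qed

lemma eigenvalues_unitary_diag:
  assumes U: "unitary U"
  shows "eigenvalues (U ** diag_mat d ** adj U) = range d"
proof (intro equalityI subsetI)
  fix c assume "c \<in> range d"
  then obtain k where k: "c = d k" by blast
  have "(U ** diag_mat d ** adj U) *v column k U = U *v (diag_mat d *v axis k 1)"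
    using U by (simp add: matrix_vector_mul_assoc[symmetric] unitary_adj_column)
  also have "diag_mat d *v axis k 1 = of_real (d k) *s axis k 1"
    by (simp add: diag_mat_mult_vec vec_eq_iff axis_def)
  also have "U *v (of_real (d k) *s axis k 1) = of_real (d k) *s column k U"
    by (simp add: vec_eq_iff matrix_vector_mult_def axis_def column_def if_distrib if_distribR
        cong: if_cong)
  finally show "c \<in> eigenvalues (U ** diag_mat d ** adj U)"
    using unitary_column_norm[OF U, of k] k unfolding eigenvalues_def
    by (auto intro!: exI[of _ "column k U"])
next
  fix c assume "c \<in> eigenvalues (U ** diag_mat d ** adj U)"
  then obtain x where x: "x \<noteq> 0" "(U ** diag_mat d ** adj U) *v x = of_real c *s x"
    unfolding eigenvalues_def by blast
  define w where "w = adj U *v x"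
  have "w \<noteq> 0" using unitary_adj_norm[OF U, of x] x(1) w_def by (metis norm_eq_zero)
  then obtain j where j: "w $ j \<noteq> 0" by (auto simp: vec_eq_iff)
  have "diag_mat d *v w = adj U *v ((U ** diag_mat d ** adj U) *v x)"
    using U by (simp add: w_def matrix_vector_mul_assoc matrix_mul_assoc[symmetric] unitary_cancel)
  also have "\<dots> = of_real c *s w"
    using x(2) by (simp add: w_def vec_eq_iff matrix_vector_mult_def sum_distrib_left mult_ac)
  finally have "of_real (d j) * w $ j = of_real c * w $ j"
    by (simp add: diag_mat_mult_vec vec_eq_iff)
  then show "c \<in> range d" using j by auto
qed

text \<open>Meaningful only for positive definite \<open>M\<close> (otherwise an unspecified \<open>SOME\<close> value);
  independent of the chosen diagonalisation by \<open>unitary_diag_fun_eq\<close>.\<close>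

definition matfun :: "(real \<Rightarrow> real) \<Rightarrow> complex^'n^'n \<Rightarrow> complex^'n^'n" where
  "matfun f M = (SOME N. \<exists>U d. unitary U \<and> (\<forall>i. d i > 0) \<and>
      M = U ** diag_mat d ** adj U \<and> N = U ** diag_mat (\<lambda>i. f (d i)) ** adj U)"

lemma mpow_eq_matfun: "mpow M r = matfun (\<lambda>x. x powr r) M"
  by (simp add: mpow_def matfun_def)

lemma unitary_diag_fun_eq:
  assumes U: "unitary U" and V: "unitary V"
    and eq: "U ** diag_mat d ** adj U = V ** diag_mat e ** adj V"
  shows "U ** diag_mat (\<lambda>i. f (d i)) ** adj U = V ** diag_mat (\<lambda>i. f (e i)) ** adj V"
proof -
  define W where "W = adj V ** U"
  have "adj V ** ((U ** diag_mat d ** adj U) ** U) = adj V ** ((V ** diag_mat e ** adj V) ** U)"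
    by (simp add: eq)
  then have WD: "W ** diag_mat d = diag_mat e ** W"
    using U V by (simp add: W_def matrix_mul_assoc[symmetric] unitary_cancel)
  \<comment> \<open>\<open>W\<close> only links equal eigenvalues, so it also intertwines \<open>f\<close> of them\<close>
  have "W $ i $ j * of_real (f (d j)) = of_real (f (e i)) * W $ i $ j" for i j
  proof -
    have "W $ i $ j * of_real (d j) = of_real (e i) * W $ i $ j"
      using WD by (metis matrix_mult_diag_nth diag_mult_matrix_nth)
    then have "W $ i $ j = 0 \<or> d j = e i" by (simp add: mult.commute)
    then show ?thesis by auto
  qed
  then have WF: "W ** diag_mat (\<lambda>i. f (d i)) = diag_mat (\<lambda>i. f (e i)) ** W"
    by (simp add: vec_eq_iff matrix_mult_diag_nth diag_mult_matrix_nth)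
  have WU: "W ** adj U = adj V"
    using U by (simp add: W_def matrix_mul_assoc[symmetric] unitary_cancel)
  have "V ** diag_mat (\<lambda>i. f (e i)) ** adj V = V ** (diag_mat (\<lambda>i. f (e i)) ** W) ** adj U"
    by (simp add: WU matrix_mul_assoc[symmetric])
  also have "\<dots> = V ** (W ** diag_mat (\<lambda>i. f (d i))) ** adj U"
    by (simp only: WF)
  also have "\<dots> = U ** diag_mat (\<lambda>i. f (d i)) ** adj U"
    using V by (simp add: W_def matrix_mul_assoc[symmetric] unitary_cancel)
  finally show ?thesis ..
qed

lemma matfun_unitary_diag:
  assumes U: "unitary U" and d: "\<forall>i. d i > 0"
  shows "matfun f (U ** diag_mat d ** adj U) = U ** diag_mat (\<lambda>i. f (d i)) ** adj U"
proof -
  let ?M = "U ** diag_mat d ** adj U"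
  have "\<exists>N V e. unitary V \<and> (\<forall>i. e i > 0) \<and> ?M = V ** diag_mat e ** adj V \<and>
         N = V ** diag_mat (\<lambda>i. f (e i)) ** adj V" using U d by blast
  from someI_ex[OF this] obtain V e where V: "unitary V" "?M = V ** diag_mat e ** adj V"
    "matfun f ?M = V ** diag_mat (\<lambda>i. f (e i)) ** adj V"
    unfolding matfun_def by blast
  then show ?thesis using unitary_diag_fun_eq[OF U V(1) V(2), of f] by simp
qed

lemma hermitian_matfun: "pos_def Y \<Longrightarrow> hermitian (matfun f Y)"
  by (metis pos_def_unitary_diag matfun_unitary_diag hermitian_unitary_diag)

section \<open>Continuity of the functional calculus\<close>

lemma matfun_add: "pos_def Y \<Longrightarrow> matfun (\<lambda>x. f x + g x) Y = matfun f Y + matfun g Y"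
  by (erule pos_def_unitary_diag) (simp add: matfun_unitary_diag unitary_diag_add)

lemma matfun_mult: "pos_def Y \<Longrightarrow> matfun (\<lambda>x. f x * g x) Y = matfun f Y ** matfun g Y"
  by (erule pos_def_unitary_diag) (simp add: matfun_unitary_diag unitary_diag_mult)

lemma matfun_const: "pos_def Y \<Longrightarrow> matfun (\<lambda>x. c) Y = c *\<^sub>R mat 1"
  by (erule pos_def_unitary_diag) (simp add: matfun_unitary_diag unitary_diag_const)

lemma matfun_id: "pos_def Y \<Longrightarrow> matfun (\<lambda>x. x) Y = Y"
  by (erule pos_def_unitary_diag) (simp add: matfun_unitary_diag)

definition hermitian_spectrum_in :: "real \<Rightarrow> real \<Rightarrow> (complex^'n^'n) set" where
  "hermitian_spectrum_in m M =
    {Y. \<exists>U d. unitary U \<and> (\<forall>i. m \<le> d i \<and> d i \<le> M) \<and> Y = U ** diag_mat d ** adj U}"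

lemma hermitian_spectrum_inE:
  assumes "Y \<in> hermitian_spectrum_in m M" "m > 0"
  obtains U d where "unitary U" "\<forall>i. d i > 0" "\<forall>i. m \<le> d i \<and> d i \<le> M"
    "Y = U ** diag_mat d ** adj U"
proof -
  from assms(1) obtain U d where "unitary U" "\<forall>i. m \<le> d i \<and> d i \<le> M" "Y = U ** diag_mat d ** adj U"
    unfolding hermitian_spectrum_in_def by blast
  moreover from this have "\<forall>i. d i > 0" using assms(2) by (meson less_le_trans)
  ultimately show ?thesis using that by blast
qed

lemma pos_def_of_hermitian_spectrum_in: "Y \<in> hermitian_spectrum_in m M \<Longrightarrow> m > 0 \<Longrightarrow> pos_def Y"
  by (erule hermitian_spectrum_inE) (simp_all add: unitary_diag_pos_def)

lemma norm_vec_le_sum: "norm (x::'a::real_normed_vector^'n) \<le> (\<Sum>i\<in>UNIV. norm (x $ i))"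
  unfolding norm_vec_def by (rule L2_set_le_sum) auto

lemma norm_unitary_diag_le:
  fixes U :: "complex^'n^'n"
  assumes U: "unitary U" and h: "\<forall>k. \<bar>h k\<bar> \<le> e"
  shows "norm (U ** diag_mat h ** adj U) \<le> real (CARD('n))^3 * e"
proof -
  let ?N = "real (CARD('n))"
  have entry: "norm ((U ** diag_mat h ** adj U) $ i $ j) \<le> ?N * e" for i j
  proof -
    have "(U ** diag_mat h ** adj U) $ i $ j = (\<Sum>k\<in>UNIV. U $ i $ k * of_real (h k) * cnj (U $ j $ k))"
      unfolding matrix_matrix_mult_def[of "U ** diag_mat h" "adj U"]
      by (simp add: matrix_mult_diag_nth adj_def)
    also have "norm \<dots> \<le> (\<Sum>k\<in>UNIV. norm (U $ i $ k) * \<bar>h k\<bar> * norm (U $ j $ k))"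
      by (rule order_trans[OF norm_sum]) (simp add: norm_mult)
    also have "\<dots> \<le> (\<Sum>k\<in>(UNIV::'n set). 1 * e * 1)"
      using unitary_entry_norm_le[OF U] h
      by (intro sum_mono mult_mono) (auto intro: order_trans[OF abs_ge_zero])
    finally show ?thesis by simp
  qed
  have "norm (U ** diag_mat h ** adj U) \<le> (\<Sum>i\<in>UNIV. \<Sum>j\<in>UNIV. norm ((U ** diag_mat h ** adj U) $ i $ j))"
    by (rule order_trans[OF norm_vec_le_sum sum_mono[OF norm_vec_le_sum]])
  also have "\<dots> \<le> (\<Sum>i\<in>(UNIV::'n set). \<Sum>j\<in>(UNIV::'n set). ?N * e)"
    by (intro sum_mono entry)
  finally show ?thesis by (simp add: power3_eq_cube mult_ac)
qed

lemma bounded_hermitian_spectrum_in: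
  assumes "m \<ge> 0"
  shows "bounded (hermitian_spectrum_in m M :: (complex^'n^'n) set)"
  unfolding bounded_iff
proof (intro exI ballI)
  fix Y :: "complex^'n^'n" assume "Y \<in> hermitian_spectrum_in m M"
  then obtain U d where U: "unitary U" "\<forall>i. m \<le> d i \<and> d i \<le> M" "Y = U ** diag_mat d ** adj U"
    unfolding hermitian_spectrum_in_def by blast
  then have "\<forall>k. \<bar>d k\<bar> \<le> M" using assms by (metis abs_of_nonneg order_trans)
  then show "norm Y \<le> real (CARD('n))^3 * M" using norm_unitary_diag_le[OF U(1)] U(3) by blast
qed

lemma norm_matfun_diff_le:
  fixes Y :: "complex^'n^'n"
  assumes "Y \<in> hermitian_spectrum_in m M" "m > 0" "\<forall>x\<in>{m..M}. \<bar>f x - g x\<bar> \<le> e"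
  shows "norm (matfun f Y - matfun g Y) \<le> real (CARD('n))^3 * e"
  using assms(1,2)
proof (rule hermitian_spectrum_inE)
  fix U d
  assume U: "unitary U" "\<forall>i. d i > 0" "\<forall>i. m \<le> d i \<and> d i \<le> M" "Y = U ** diag_mat d ** adj U"
  then have "matfun f Y - matfun g Y = U ** diag_mat (\<lambda>i. f (d i) - g (d i)) ** adj U"
    by (simp add: matfun_unitary_diag unitary_diag_diff)
  moreover have "\<forall>k. \<bar>f (d k) - g (d k)\<bar> \<le> e" using U(3) assms(3) by auto
  ultimately show ?thesis using norm_unitary_diag_le[OF U(1)] by simp
qed

lemma continuous_on_matrix_mult:
  "continuous_on S F \<Longrightarrow> continuous_on S G \<Longrightarrow>
    continuous_on S (\<lambda>Y. (F Y :: complex^'n^'m) ** (G Y :: complex^'k^'n))"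
  unfolding matrix_matrix_mult_def by (intro continuous_intros)

lemma continuous_on_uniform_approx:
  assumes "\<And>e. e > 0 \<Longrightarrow> \<exists>G. continuous_on S G \<and> (\<forall>x\<in>S. dist (F x) (G x) \<le> e)"
  shows "continuous_on S F"
proof -
  obtain G where G: "\<And>n. continuous_on S (G n)" "\<And>n x. x \<in> S \<Longrightarrow> dist (F x) (G n x) \<le> 1 / Suc n"
    using assms[of "1 / Suc _"] by (metis of_nat_0_less_iff zero_less_Suc zero_less_divide_1_iff)
  have "uniform_limit S G F sequentially"
    unfolding uniform_limit_iff
  proof (intro allI impI)
    fix e :: real assume "e > 0"
    then obtain N where N: "1 / Suc N < e" using nat_approx_posE by blast
    have "dist (G n x) (F x) < e" if "n \<ge> N" "x \<in> S" for n x
    proof -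
      have "1 / real (Suc n) \<le> 1 / Suc N" using that(1) by (simp add: frac_le)
      then show ?thesis using G(2)[OF that(2), of n] N by (simp add: dist_commute)
    qed
    then show "\<forall>\<^sub>F n in sequentially. \<forall>x\<in>S. dist (G n x) (F x) < e"
      unfolding eventually_sequentially by blast
  qed
  then show ?thesis by (rule uniform_limit_theorem[rotated]) (simp_all add: G(1))
qed

text \<open>Continuity passes from polynomials to all continuous \<open>f\<close> by Stone-Weierstrass, because
  \<open>matfun\<close> is uniformly Lipschitz in the sup norm of \<open>f\<close> on \<open>[m, M]\<close>.\<close>

lemma continuous_on_matfun:
  assumes m: "m > 0" and f: "continuous_on {m..M} f"
  shows "continuous_on (hermitian_spectrum_in m M :: (complex^'n^'n) set) (matfun f)"
proof (rule continuous_on_uniform_approx)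
  fix e :: real assume "e > 0"
  define C where "C = real (CARD('n))^3"
  have C: "C > 0" by (simp add: C_def)
  let ?S = "hermitian_spectrum_in m M :: (complex^'n^'n) set"
  let ?P = "\<lambda>g. continuous_on {m..M} g \<and> continuous_on ?S (matfun g)"
  have pos: "pos_def Y" if "Y \<in> ?S" for Y using pos_def_of_hermitian_spectrum_in[OF that m] .
  obtain g where g: "?P g" "\<forall>x\<in>{m..M}. \<bar>f x - g x\<bar> < e / C"
  proof (rule exE[OF Stone_Weierstrass_HOL[OF compact_Icc _ _ _ _ _ f, of ?P "e / C"]])
    show "?P (\<lambda>x. c)" for c
      by (auto intro!: continuous_on_eq[OF _ matfun_const[OF pos, symmetric]])
    show "?P (\<lambda>x. g x + h x)" if "?P g \<and> ?P h" for g h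
      using that by (auto intro!: continuous_on_add
          continuous_on_eq[OF _ matfun_add[OF pos, symmetric]])
    show "?P (\<lambda>x. g x * h x)" if "?P g \<and> ?P h" for g h
      using that by (auto intro!: continuous_on_mult continuous_on_matrix_mult
          continuous_on_eq[OF _ matfun_mult[OF pos, symmetric]])
    have "?P (\<lambda>x. x)"
      by (auto intro!: continuous_on_eq[OF _ matfun_id[OF pos, symmetric]])
    then show "\<exists>g. ?P g \<and> g x \<noteq> g y" if "x \<in> {m..M} \<and> y \<in> {m..M} \<and> x \<noteq> y" for x y
      using that by blast
  qed (use \<open>e > 0\<close> C in auto)
  have "dist (matfun f Y) (matfun g Y) \<le> e" if "Y \<in> ?S" for Y
    using norm_matfun_diff_le[OF that m, of f g "e / C"] g(2) C
    by (simp add: dist_norm C_def less_imp_le)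
  then show "\<exists>G. continuous_on ?S G \<and> (\<forall>Y\<in>?S. dist (matfun f Y) (G Y) \<le> e)"
    using g(1) by blast
qed

section \<open>Real powers and the Loewner-Heinz inequality\<close>

lemma mpow_unitary_diag:
  "unitary U \<Longrightarrow> \<forall>i. d i > 0 \<Longrightarrow>
    mpow (U ** diag_mat d ** adj U) r = U ** diag_mat (\<lambda>i. d i powr r) ** adj U"
  by (simp add: mpow_eq_matfun matfun_unitary_diag)

lemma pos_def_mpow:
  assumes "pos_def Y"
  shows "pos_def (mpow Y r)"
proof -
  obtain U d where U: "unitary U" "\<forall>i. d i > 0" "Y = U ** diag_mat d ** adj U"
    using pos_def_unitary_diag[OF assms] by blast
  moreover have "\<forall>i. d i powr r > 0" using U(2) by (metis less_irrefl powr_gt_zero)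
  ultimately show ?thesis by (simp add: mpow_unitary_diag unitary_diag_pos_def)
qed

lemma mpow_mpow:
  assumes "pos_def Y"
  shows "mpow (mpow Y a) b = mpow Y (a * b)"
proof -
  obtain U d where U: "unitary U" "\<forall>i. d i > 0" "Y = U ** diag_mat d ** adj U"
    using pos_def_unitary_diag[OF assms] by blast
  moreover have "\<forall>i. d i powr a > 0" using U(2) by (metis less_irrefl powr_gt_zero)
  ultimately show ?thesis by (simp add: mpow_unitary_diag powr_powr)
qed

lemma mpow_one: "pos_def Y \<Longrightarrow> mpow Y 1 = Y"
  by (erule pos_def_unitary_diag) (simp add: mpow_unitary_diag less_imp_le)

lemma Re_qform_mpow_nonneg:
  assumes "pos_def Y"
  shows "0 \<le> Re (qform (mpow Y r) x)"
proof -
  obtain U d where U: "unitary U" "\<forall>i. d i > 0" "Y = U ** diag_mat d ** adj U"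
    using pos_def_unitary_diag[OF assms] by blast
  then show ?thesis
    using qform_ge_of_unitary_diag_ge[OF U(1), of 0 "\<lambda>i. d i powr r" x]
    by (simp add: mpow_unitary_diag)
qed

lemma Re_qform_mpow_ge:
  assumes Y: "pos_def Y" and c: "c > 0" "\<forall>x. c * (norm x)\<^sup>2 \<le> Re (qform Y x)" and "r \<ge> 0"
  shows "c powr r * (norm x)\<^sup>2 \<le> Re (qform (mpow Y r) x)"
proof -
  obtain U d where U: "unitary U" "\<forall>i. d i > 0" "Y = U ** diag_mat d ** adj U"
    using pos_def_unitary_diag[OF Y] by blast
  then have "\<forall>i. c powr r \<le> d i powr r"
    using c unitary_diag_ge_of_qform_ge[OF U(1)] \<open>r \<ge> 0\<close> by (auto intro: powr_mono2)
  then show ?thesis using U by (simp add: mpow_unitary_diag qform_ge_of_unitary_diag_ge)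
qed

lemma Re_qform_mpow_neg_le:
  assumes Y: "pos_def Y" and c: "c > 0" "\<forall>x. c * (norm x)\<^sup>2 \<le> Re (qform Y x)" and "a \<ge> 0"
  shows "Re (qform (mpow Y (- a)) x) \<le> c powr (- a) * (norm x)\<^sup>2"
proof -
  obtain U d where U: "unitary U" "\<forall>i. d i > 0" "Y = U ** diag_mat d ** adj U"
    using pos_def_unitary_diag[OF Y] by blast
  then have "\<forall>i. d i powr (- a) \<le> c powr (- a)"
    using c unitary_diag_ge_of_qform_ge[OF U(1)] \<open>a \<ge> 0\<close> by (auto intro: powr_mono2')
  then show ?thesis using U by (simp add: mpow_unitary_diag qform_le_of_unitary_diag_le)
qed

text \<open>Since \<open>d / (d + l) = 1 - l (d + l)\<^sup>-\<^sup>1\<close> is operator monotone in \<open>d\<close>, the representation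
  \<open>d powr r * heinz_const r = \<integral> heinz_kernel r d l dl\<close> (\<open>0 < r < 1\<close>) makes \<open>d powr r\<close>
  operator monotone as well.\<close>

definition heinz_kernel :: "real \<Rightarrow> real \<Rightarrow> real \<Rightarrow> real" where
  "heinz_kernel r d l = indicator {0<..} l * l powr (r - 1) * (d / (d + l))"

definition heinz_const :: "real \<Rightarrow> ennreal" where
  "heinz_const r = (\<integral>\<^sup>+ l. ennreal (heinz_kernel r 1 l) \<partial>lborel)"

lemma heinz_kernel_measurable [measurable]: "heinz_kernel r d \<in> borel_measurable borel"
  unfolding heinz_kernel_def by measurable

lemma heinz_kernel_nonneg: "d > 0 \<Longrightarrow> heinz_kernel r d l \<ge> 0"
  by (auto simp: heinz_kernel_def indicator_def)

lemma heinz_kernel_resolvent: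
  "d > 0 \<Longrightarrow> heinz_kernel r d l = indicator {0<..} l * l powr (r - 1) * (1 - l * (1 / (d + l)))"
  by (cases "l > 0") (simp_all add: heinz_kernel_def field_simps)

lemma heinz_kernel_scale:
  assumes d: "d > 0"
  shows "heinz_kernel r d (d * x) = d powr (r - 1) * heinz_kernel r 1 x"
proof (cases "x > 0")
  case True
  have "d + d * x = d * (1 + x)" by (simp add: algebra_simps)
  then have "d / (d + d * x) = 1 / (1 + x)" using d by simp
  then show ?thesis using True d by (simp add: heinz_kernel_def powr_mult)
next
  case False
  then show ?thesis using d by (simp add: heinz_kernel_def zero_less_mult_iff)
qed

lemma nn_integral_heinz_kernel:
  assumes d: "d > 0"
  shows "(\<integral>\<^sup>+ l. ennreal (heinz_kernel r d l) \<partial>lborel) = ennreal (d powr r) * heinz_const r"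
proof -
  have "(\<integral>\<^sup>+ l. ennreal (heinz_kernel r d l) \<partial>lborel)
      = ennreal d * (\<integral>\<^sup>+ x. ennreal (heinz_kernel r d (0 + d * x)) \<partial>lborel)"
    using nn_integral_real_affine[of "\<lambda>l. ennreal (heinz_kernel r d l)" d 0] d by simp
  also have "\<dots> = ennreal d * (\<integral>\<^sup>+ x. ennreal (d powr (r - 1)) * ennreal (heinz_kernel r 1 x) \<partial>lborel)"
    by (simp add: heinz_kernel_scale[OF d] ennreal_mult heinz_kernel_nonneg)
  also have "\<dots> = ennreal (d * d powr (r - 1)) * heinz_const r"
    unfolding heinz_const_def using d by (simp add: nn_integral_cmult ennreal_mult mult.assoc)
  finally show ?thesis using d by (simp add: powr_diff)
qed

lemma heinz_const_pos:
  assumes "0 < r" "r < 1"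
  shows "heinz_const r > 0"
proof -
  have "ennreal (1/6) = (\<integral>\<^sup>+ l. ennreal (1/6) * indicator {1..2::real} l \<partial>lborel)"
    by (simp add: nn_integral_cmult_indicator)
  also have "\<dots> \<le> heinz_const r"
    unfolding heinz_const_def
  proof (intro nn_integral_mono)
    fix l :: real
    show "ennreal (1/6) * indicator {1..2} l \<le> ennreal (heinz_kernel r 1 l)"
    proof (cases "l \<in> {1..2}")
      case True
      have "1/2 \<le> l powr (-1)" using True by (simp add: powr_minus field_simps)
      also have "\<dots> \<le> l powr (r - 1)" using True assms by (intro powr_mono) auto
      finally have "(1/2) * (1/3) \<le> l powr (r - 1) * (1 / (1 + l))"
        using True by (intro mult_mono) (auto simp: field_simps)
      then show ?thesis using True by (simp add: heinz_kernel_def ennreal_leI)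
    qed simp
  qed
  finally show ?thesis by (metis ennreal_less_zero_iff order_less_le_trans zero_less_divide_1_iff
      zero_less_numeral)
qed

lemma heinz_kernel_le:
  "heinz_kernel r 1 l \<le> indicator {0..1} l * l powr (r - 1) + indicator {1..} l * l powr (r - 2)"
proof (cases "l > 0")
  case True
  show ?thesis
  proof (cases "l \<le> 1")
    case True
    have "l powr (r - 1) * (1 / (1 + l)) \<le> l powr (r - 1) * 1"
      using \<open>l > 0\<close> by (intro mult_left_mono) (auto simp: field_simps)
    then show ?thesis using True \<open>l > 0\<close> by (simp add: heinz_kernel_def indicator_def)
  next
    case False
    have "l powr (r - 1) * (1 / (1 + l)) \<le> l powr (r - 1) * (1 / l)"
      using \<open>l > 0\<close> by (intro mult_left_mono) (auto simp: field_simps)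
    also have "\<dots> = l powr (r - 2)"
      using \<open>l > 0\<close> by (simp add: powr_diff powr_add field_simps power2_eq_square)
    finally show ?thesis using False \<open>l > 0\<close> by (simp add: heinz_kernel_def indicator_def)
  qed
qed (simp add: heinz_kernel_def)

lemma heinz_const_finite:
  assumes "0 < r" "r < 1"
  shows "heinz_const r < \<infinity>"
proof -
  have h0: "((\<lambda>x. x powr (r - 1)) has_integral (1 powr (r - 1 + 1) / (r - 1 + 1))) {0..1}"
    by (rule has_integral_powr_from_0) (use assms in auto)
  have I0: "(\<integral>\<^sup>+ x. ennreal (indicator {0..1} x * x powr (r - 1)) \<partial>lborel) = ennreal (1 / r)"
    using nn_integral_has_integral_lebesgue[OF _ h0] by simp
  have h1: "((\<lambda>x. x powr (r - 2)) has_integral (-(1 powr (r - 2 + 1)) / (r - 2 + 1))) {1..}"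
    by (rule has_integral_powr_to_inf) (use assms in auto)
  have I1: "(\<integral>\<^sup>+ x. ennreal (indicator {1..} x * x powr (r - 2)) \<partial>lborel) = ennreal (1 / (1 - r))"
    using nn_integral_has_integral_lebesgue[OF _ h1] by (simp add: minus_divide_right minus_diff_eq)
  have "heinz_const r \<le> (\<integral>\<^sup>+ x. ennreal (indicator {0..1} x * x powr (r - 1))
      + ennreal (indicator {1..} x * x powr (r - 2)) \<partial>lborel)"
    unfolding heinz_const_def
    by (intro nn_integral_mono) (simp add: heinz_kernel_le ennreal_plus[symmetric] del: ennreal_plus)
  also have "\<dots> = ennreal (1 / r) + ennreal (1 / (1 - r))"
    by (subst nn_integral_add) (auto simp: I0 I1)
  finally show ?thesis using ennreal_add_less_top top.not_eq_extremum by (auto simp: order_le_less_trans)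
qed

text \<open>For \<open>N \<ge> 0\<close> with inverse \<open>M\<close>, \<open>\<langle>v, M v\<rangle> = max\<^sub>w (2 Re \<langle>w, v\<rangle> - \<langle>w, N w\<rangle>)\<close>, attained at
  \<open>w = M v\<close>; being a maximum of functions antitone in \<open>N\<close>, it is antitone in \<open>N\<close>.\<close>

lemma qform_inverse_variational:
  assumes hN: "hermitian N" and NM: "N ** M = mat 1" and psd: "\<forall>w. Re (qform N w) \<ge> 0"
  shows "2 * Re (cinner w v) - Re (qform N w) \<le> Re (qform M v)"
    and "2 * Re (cinner (M *v v) v) - Re (qform N (M *v v)) = Re (qform M v)"
proof -
  define u where "u = M *v v"
  have Nu: "N *v u = v" using NM by (simp add: u_def matrix_vector_mul_assoc)
  have c1: "cinner u (N *v w) = cinner v w" using hermitian_cinner[OF hN, of u w] Nu by simp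
  have c2: "Re (cinner v w) = Re (cinner w v)" by (subst cinner_commute) simp
  have c3: "Re (cinner u v) = Re (qform M v)"
    by (simp add: u_def qform_cinner) (subst cinner_commute, simp)
  have "qform N (w - u) = cinner w (N *v w) - cinner w v - cinner u (N *v w) + cinner u v"
    by (simp add: qform_cinner matrix_vector_mult_diff_distrib Nu cinner_diff_left cinner_diff_right)
  then have "Re (qform N (w - u)) = Re (qform N w) - 2 * Re (cinner w v) + Re (qform M v)"
    using c1 c2 c3 by (simp add: qform_cinner)
  then show "2 * Re (cinner w v) - Re (qform N w) \<le> Re (qform M v)"
    using psd[rule_format, of "w - u"] by simp
  show "2 * Re (cinner (M *v v) v) - Re (qform N (M *v v)) = Re (qform M v)"
    using c3 by (simp add: u_def[symmetric] qform_cinner Nu)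
qed

lemma qform_inverse_antitone:
  assumes "hermitian N1" "N1 ** M1 = mat 1" "\<forall>w. Re (qform N1 w) \<ge> 0"
    and "hermitian N2" "N2 ** M2 = mat 1" "\<forall>w. Re (qform N2 w) \<ge> 0"
    and le: "\<forall>w. Re (qform N1 w) \<le> Re (qform N2 w)"
  shows "Re (qform M2 v) \<le> Re (qform M1 v)"
proof -
  let ?u = "M2 *v v"
  have "Re (qform M2 v) = 2 * Re (cinner ?u v) - Re (qform N2 ?u)"
    using qform_inverse_variational(2)[OF assms(4-6)] by simp
  also have "\<dots> \<le> 2 * Re (cinner ?u v) - Re (qform N1 ?u)" using le by simp
  also have "\<dots> \<le> Re (qform M1 v)" by (rule qform_inverse_variational(1)[OF assms(1-3)])
  finally show ?thesis .
qed

lemma resolvent_inverse: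
  assumes Y: "pos_def Y" and l: "l > 0"
  shows "hermitian (Y + l *\<^sub>R mat 1)" "(Y + l *\<^sub>R mat 1) ** matfun (\<lambda>z. 1 / (z + l)) Y = mat 1"
    "\<forall>w. Re (qform (Y + l *\<^sub>R mat 1) w) \<ge> 0"
proof -
  obtain U d where U: "unitary U" "\<forall>i. d i > 0" "Y = U ** diag_mat d ** adj U"
    using pos_def_unitary_diag[OF Y] by blast
  have N: "Y + l *\<^sub>R mat 1 = U ** diag_mat (\<lambda>i. d i + l) ** adj U"
    using U by (simp add: unitary_diag_const[OF U(1), symmetric] unitary_diag_add)
  show "hermitian (Y + l *\<^sub>R mat 1)" by (simp add: N hermitian_unitary_diag)
  have "\<forall>i. (d i + l) * (1 / (d i + l)) = 1"
    using U(2) l by (metis add_pos_pos less_irrefl nonzero_mult_div_cancel_left div_by_1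
        times_divide_eq_right)
  moreover have "matfun (\<lambda>z. 1 / (z + l)) Y = U ** diag_mat (\<lambda>i. 1 / (d i + l)) ** adj U"
    using U by (simp add: matfun_unitary_diag)
  ultimately show "(Y + l *\<^sub>R mat 1) ** matfun (\<lambda>z. 1 / (z + l)) Y = mat 1"
    using unitary_diag_const[OF U(1), of 1] by (simp add: N unitary_diag_mult[OF U(1)])
  show "\<forall>w. Re (qform (Y + l *\<^sub>R mat 1) w) \<ge> 0"
    using qform_ge_of_unitary_diag_ge[OF U(1), of 0 "\<lambda>i. d i + l"] U(2) l
    by (simp add: N add_nonneg_nonneg less_imp_le)
qed

lemma qform_resolvent_antitone:
  assumes Y: "pos_def Y" and Z: "pos_def Z" and YZ: "loewner_le Y Z" and l: "l > 0"
  shows "Re (qform (matfun (\<lambda>z. 1 / (z + l)) Z) x) \<le> Re (qform (matfun (\<lambda>z. 1 / (z + l)) Y) x)"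
proof (rule qform_inverse_antitone[OF resolvent_inverse[OF Y l] resolvent_inverse[OF Z l]])
  show "\<forall>w. Re (qform (Y + l *\<^sub>R mat 1) w) \<le> Re (qform (Z + l *\<^sub>R mat 1) w)"
    using YZ by (simp add: loewner_le_iff qform_add)
qed

lemma qform_powr_integral:
  assumes Y: "pos_def Y"
  shows "ennreal (Re (qform (mpow Y r) x)) * heinz_const r =
    (\<integral>\<^sup>+ l. ennreal (indicator {0<..} l * l powr (r - 1) *
        ((norm x)\<^sup>2 - l * Re (qform (matfun (\<lambda>z. 1 / (z + l)) Y) x))) \<partial>lborel)"
proof -
  obtain U d where U: "unitary U" "\<forall>i. d i > 0" "Y = U ** diag_mat d ** adj U"
    using pos_def_unitary_diag[OF Y] by blast
  define w where "w k = (norm ((adj U *v x) $ k))\<^sup>2" for k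
  have w0: "w k \<ge> 0" for k by (simp add: w_def)
  have Re_qform: "Re (qform (matfun f Y) x) = (\<Sum>k\<in>UNIV. f (d k) * w k)" for f
    using U by (simp add: matfun_unitary_diag Re_qform_unitary_diag w_def)
  have "ennreal (\<Sum>k\<in>UNIV. d k powr r * w k) * heinz_const r
      = (\<Sum>k\<in>UNIV. ennreal (d k powr r * w k) * heinz_const r)"
    unfolding sum_distrib_right[symmetric] using w0 by (subst sum_ennreal) auto
  also have "\<dots> = (\<Sum>k\<in>UNIV. \<integral>\<^sup>+ l. ennreal (w k * heinz_kernel r (d k) l) \<partial>lborel)"
  proof (rule sum.cong[OF refl])
    fix k
    have "ennreal (d k powr r * w k) * heinz_const r = ennreal (w k) * (ennreal (d k powr r) * heinz_const r)"
      using w0 by (simp add: ennreal_mult mult_ac)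
    also have "\<dots> = (\<integral>\<^sup>+ l. ennreal (w k) * ennreal (heinz_kernel r (d k) l) \<partial>lborel)"
      using U(2) by (simp add: nn_integral_heinz_kernel nn_integral_cmult)
    finally show "ennreal (d k powr r * w k) * heinz_const r = (\<integral>\<^sup>+ l. ennreal (w k * heinz_kernel r (d k) l) \<partial>lborel)"
      by (simp add: ennreal_mult' w0)
  qed
  also have "\<dots> = (\<integral>\<^sup>+ l. (\<Sum>k\<in>UNIV. ennreal (w k * heinz_kernel r (d k) l)) \<partial>lborel)"
    by (rule nn_integral_sum[symmetric]) measurable
  also have "\<dots> = (\<integral>\<^sup>+ l. ennreal (indicator {0<..} l * l powr (r - 1) *
        ((norm x)\<^sup>2 - l * Re (qform (matfun (\<lambda>z. 1 / (z + l)) Y) x))) \<partial>lborel)"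
  proof (rule nn_integral_cong)
    fix l :: real
    have "(\<Sum>k\<in>UNIV. w k * heinz_kernel r (d k) l)
        = indicator {0<..} l * l powr (r - 1) * ((\<Sum>k\<in>UNIV. w k) - l * (\<Sum>k\<in>UNIV. 1 / (d k + l) * w k))"
      using U(2) by (simp add: heinz_kernel_resolvent sum_distrib_left sum_distrib_right
          sum_subtractf algebra_simps)
    also have "\<dots> = indicator {0<..} l * l powr (r - 1) *
        ((norm x)\<^sup>2 - l * Re (qform (matfun (\<lambda>z. 1 / (z + l)) Y) x))"
      by (simp only: Re_qform w_def sum_norm_adj_unitary[OF U(1)])
    finally show "(\<Sum>k\<in>UNIV. ennreal (w k * heinz_kernel r (d k) l)) = ennreal (indicator {0<..} l *
        l powr (r - 1) * ((norm x)\<^sup>2 - l * Re (qform (matfun (\<lambda>z. 1 / (z + l)) Y) x)))"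
      using U(2) w0 heinz_kernel_nonneg by (simp add: sum_ennreal)
  qed
  finally show ?thesis by (simp add: mpow_eq_matfun Re_qform)
qed

lemma qform_mpow_mono:
  assumes Y: "pos_def Y" and Z: "pos_def Z" and YZ: "loewner_le Y Z" and r: "0 < r" "r < 1"
  shows "Re (qform (mpow Y r) x) \<le> Re (qform (mpow Z r) x)"
proof -
  define R where "R W l = Re (qform (matfun (\<lambda>z. 1 / (z + l)) W) x)" for W :: "complex^'a^'a" and l
  have "ennreal (Re (qform (mpow Y r) x)) * heinz_const r
      \<le> ennreal (Re (qform (mpow Z r) x)) * heinz_const r"
    unfolding qform_powr_integral[OF Y] qform_powr_integral[OF Z] R_def[symmetric]
  proof (intro nn_integral_mono ennreal_leI)
    fix l :: real
    show "indicator {0<..} l * l powr (r - 1) * ((norm x)\<^sup>2 - l * R Y l)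
        \<le> indicator {0<..} l * l powr (r - 1) * ((norm x)\<^sup>2 - l * R Z l)"
    proof (cases "l > 0")
      case True
      then have "l * R Z l \<le> l * R Y l"
        using qform_resolvent_antitone[OF Y Z YZ True] by (intro mult_left_mono) (auto simp: R_def)
      then show ?thesis by (intro mult_left_mono) auto
    qed simp
  qed
  moreover obtain c where c: "heinz_const r = ennreal c" "c \<ge> 0"
    using heinz_const_finite[OF r] by (cases "heinz_const r") auto
  moreover have "c > 0" using heinz_const_pos[OF r] c by simp
  ultimately show ?thesis
    using Re_qform_mpow_nonneg[OF Z]
    by (simp add: ennreal_mult''[symmetric] ennreal_le_iff mult_le_cancel_right_pos)
qed

theorem loewner_heinz:
  assumes Y: "pos_def Y" and Z: "pos_def Z" and YZ: "loewner_le Y Z" and r: "0 < r" "r \<le> 1"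
  shows "loewner_le (mpow Y r) (mpow Z r)"
proof (cases "r = 1")
  case True
  then show ?thesis using YZ by (simp add: mpow_one Y Z)
next
  case False
  then show ?thesis
    using qform_mpow_mono[OF Y Z YZ] r
    by (simp add: loewner_le_iff hermitian_diff mpow_eq_matfun hermitian_matfun Y Z)
qed

section \<open>The fixed-point argument\<close>

definition loewner_interval :: "real \<Rightarrow> complex^'n^'n \<Rightarrow> (complex^'n^'n) set" where
  "loewner_interval c Q = {Y. hermitian Y \<and>
     (\<forall>x. c * (norm x)\<^sup>2 \<le> Re (qform Y x) \<and> Re (qform Y x) \<le> Re (qform Q x))}"

lemma loewner_le_of_loewner_interval: "Y \<in> loewner_interval c Q \<Longrightarrow> hermitian Q \<Longrightarrow> loewner_le Y Q"
  by (simp add: loewner_interval_def loewner_le_iff hermitian_diff)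

lemma pos_def_of_loewner_interval: "Y \<in> loewner_interval c Q \<Longrightarrow> c > 0 \<Longrightarrow> pos_def Y"
  unfolding loewner_interval_def pos_def_def
  by (auto intro: order.strict_trans2[rotated] simp: mult_pos_pos)

lemma convex_loewner_interval: "convex (loewner_interval c (Q::complex^'n^'n))"
proof (rule convexI)
  fix Y1 Y2 :: "complex^'n^'n" and u v :: real
  assume Y: "Y1 \<in> loewner_interval c Q" "Y2 \<in> loewner_interval c Q"
    and uv: "0 \<le> u" "0 \<le> v" "u + v = 1"
  have comb: "Re (qform (u *\<^sub>R Y1 + v *\<^sub>R Y2) x) = u * Re (qform Y1 x) + v * Re (qform Y2 x)" for x
    by (simp add: qform_add qform_scaleR)
  have "c * (norm x)\<^sup>2 \<le> u * Re (qform Y1 x) + v * Re (qform Y2 x)" for x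
    using convex_bound_le[of "- Re (qform Y1 x)" "- c * (norm x)\<^sup>2" "- Re (qform Y2 x)" u v] Y uv
    by (fastforce simp: loewner_interval_def)
  moreover have "u * Re (qform Y1 x) + v * Re (qform Y2 x) \<le> Re (qform Q x)" for x
    using convex_bound_le[of "Re (qform Y1 x)" "Re (qform Q x)" "Re (qform Y2 x)" u v] Y uv
    by (fastforce simp: loewner_interval_def)
  moreover have "hermitian (u *\<^sub>R Y1 + v *\<^sub>R Y2)"
    using Y by (auto simp: loewner_interval_def intro: hermitian_add hermitian_scaleR)
  ultimately show "u *\<^sub>R Y1 + v *\<^sub>R Y2 \<in> loewner_interval c Q"
    by (simp add: loewner_interval_def comb)
qed

lemma closed_loewner_interval: "closed (loewner_interval c (Q::complex^'n^'n))"
proof -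
  have "loewner_interval c Q = {Y. adj Y = Y} \<inter>
      {Y. \<forall>x. c * (norm x)\<^sup>2 \<le> Re (qform Y x) \<and> Re (qform Y x) \<le> Re (qform Q x)}"
    by (auto simp: loewner_interval_def hermitian_def)
  moreover have "closed {Y::complex^'n^'n. adj Y = Y}"
    unfolding adj_def by (intro closed_Collect_eq continuous_intros)
  moreover have "closed {Y::complex^'n^'n. \<forall>x. c * (norm x)\<^sup>2 \<le> Re (qform Y x) \<and> Re (qform Y x) \<le> Re (qform Q x)}"
    unfolding qform_def matrix_vector_mult_def
    by (intro closed_Collect_all closed_Collect_conj closed_Collect_le continuous_intros)
  ultimately show ?thesis by auto
qed

lemma loewner_interval_subset_spectrum_in:
  assumes "\<forall>x. Re (qform Q x) \<le> M * (norm x)\<^sup>2"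
  shows "loewner_interval c Q \<subseteq> hermitian_spectrum_in c M"
proof
  fix Y assume Y: "Y \<in> loewner_interval c Q"
  then have "hermitian Y" by (simp add: loewner_interval_def)
  then obtain U d where U: "unitary U" "Y = U ** diag_mat d ** adj U"
    using spectral_theorem by blast
  have "\<forall>i. c \<le> d i"
    using Y U unitary_diag_ge_of_qform_ge[OF U(1)] by (auto simp: loewner_interval_def)
  moreover have "\<forall>x. Re (qform (U ** diag_mat d ** adj U) x) \<le> M * (norm x)\<^sup>2"
    using Y U assms by (auto simp: loewner_interval_def intro: order_trans)
  then have "\<forall>i. d i \<le> M" using unitary_diag_le_of_qform_le[OF U(1)] by blast
  ultimately show "Y \<in> hermitian_spectrum_in c M"
    using U unfolding hermitian_spectrum_in_def by (intro CollectI exI[of _ U] exI[of _ d]) auto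
qed

lemma Re_qform_conj_le:
  assumes "\<forall>y. Re (qform P y) \<le> C * (norm y)\<^sup>2" "C \<ge> 0"
  shows "Re (qform (adj A ** P ** A) x) \<le> C * (spec_norm A)\<^sup>2 * (norm x)\<^sup>2"
proof -
  have "Re (qform (adj A ** P ** A) x) \<le> C * (norm (A *v x))\<^sup>2"
    using assms(1) by (simp add: qform_conj)
  also have "\<dots> \<le> C * (spec_norm A * norm x)\<^sup>2"
    using spec_norm_bound[of A x] assms(2) by (intro mult_left_mono power_mono) auto
  finally show ?thesis by (simp add: power_mult_distrib mult_ac)
qed

text \<open>On the interval \<open>Y\<^sup>-\<^sup>a \<le> c\<^sup>-\<^sup>a I\<close>, so the margin hypothesis keeps the image above \<open>c I\<close>.\<close>

lemma loewner_interval_self_map: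
  fixes A B Q :: "complex^'n^'n"
  assumes hermQ: "hermitian Q" and Qge: "\<forall>x. k' * (norm x)\<^sup>2 \<le> Re (qform Q x)"
    and c: "c > 0" and ab: "a \<ge> 0" "b \<ge> 0"
    and margin: "c \<le> k' - (spec_norm A)\<^sup>2 * c powr (- a) - (spec_norm B)\<^sup>2 * c powr (- b)"
    and Y: "Y \<in> loewner_interval c Q"
  shows "Q - adj A ** mpow Y (- a) ** A - adj B ** mpow Y (- b) ** B \<in> loewner_interval c Q"
proof -
  have posY: "pos_def Y" using pos_def_of_loewner_interval[OF Y c] .
  have Yge: "\<forall>x. c * (norm x)\<^sup>2 \<le> Re (qform Y x)" using Y by (simp add: loewner_interval_def)
  let ?F = "Q - adj A ** mpow Y (- a) ** A - adj B ** mpow Y (- b) ** B"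
  have "hermitian ?F"
    by (intro hermitian_diff hermQ hermitian_conj) (simp_all add: mpow_eq_matfun hermitian_matfun posY)
  moreover have "c * (norm x)\<^sup>2 \<le> Re (qform ?F x) \<and> Re (qform ?F x) \<le> Re (qform Q x)" for x
  proof -
    have "0 \<le> Re (qform (adj A ** mpow Y (- a) ** A) x)" "0 \<le> Re (qform (adj B ** mpow Y (- b) ** B) x)"
      by (simp_all add: qform_conj Re_qform_mpow_nonneg posY)
    moreover have "Re (qform (adj A ** mpow Y (- a) ** A) x) \<le> c powr (- a) * (spec_norm A)\<^sup>2 * (norm x)\<^sup>2"
      using Re_qform_mpow_neg_le[OF posY c Yge ab(1)] by (intro Re_qform_conj_le) auto
    moreover have "Re (qform (adj B ** mpow Y (- b) ** B) x) \<le> c powr (- b) * (spec_norm B)\<^sup>2 * (norm x)\<^sup>2"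
      using Re_qform_mpow_neg_le[OF posY c Yge ab(2)] by (intro Re_qform_conj_le) auto
    moreover have "c * (norm x)\<^sup>2 \<le> k' * (norm x)\<^sup>2
        - c powr (- a) * (spec_norm A)\<^sup>2 * (norm x)\<^sup>2 - c powr (- b) * (spec_norm B)\<^sup>2 * (norm x)\<^sup>2"
      using mult_right_mono[OF margin, of "(norm x)\<^sup>2"] by (simp add: algebra_simps)
    ultimately show ?thesis
      using Qge[rule_format, of x] by (simp add: qform_diff)
  qed
  ultimately show ?thesis by (simp add: loewner_interval_def)
qed

lemma loewner_interval_fixed_point:
  fixes A B Q :: "complex^'n^'n"
  assumes hermQ: "hermitian Q" and Qge: "\<forall>x. k' * (norm x)\<^sup>2 \<le> Re (qform Q x)"
    and Qle: "\<forall>x. Re (qform Q x) \<le> k * (norm x)\<^sup>2"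
    and c: "c > 0" and ab: "a \<ge> 0" "b \<ge> 0"
    and margin: "c \<le> k' - (spec_norm A)\<^sup>2 * c powr (- a) - (spec_norm B)\<^sup>2 * c powr (- b)"
  obtains Y where "Y \<in> loewner_interval c Q"
    "Q - adj A ** mpow Y (- a) ** A - adj B ** mpow Y (- b) ** B = Y"
proof -
  let ?K = "loewner_interval c Q"
  have KS: "?K \<subseteq> hermitian_spectrum_in c k" by (rule loewner_interval_subset_spectrum_in[OF Qle])
  have "compact ?K"
    using bounded_subset[OF bounded_hermitian_spectrum_in KS] c closed_loewner_interval
    by (auto simp: compact_eq_bounded_closed)
  moreover have "Q \<in> ?K"
  proof -
    have "c \<le> k'"
      using margin by (smt (verit) zero_le_power2 powr_ge_zero mult_nonneg_nonneg)
    then have "c * (norm x)\<^sup>2 \<le> Re (qform Q x)" for x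
      using Qge by (meson mult_right_mono zero_le_power2 order_trans)
    then show ?thesis using hermQ by (simp add: loewner_interval_def)
  qed
  moreover have "continuous_on ?K (\<lambda>Y. mpow Y r)" for r
  proof -
    have "continuous_on (hermitian_spectrum_in c k) (matfun (\<lambda>x. x powr r) :: complex^'n^'n \<Rightarrow> _)"
      using c by (intro continuous_on_matfun continuous_intros) auto
    then show ?thesis by (simp add: mpow_eq_matfun[abs_def] continuous_on_subset[OF _ KS])
  qed
  then have "continuous_on ?K (\<lambda>Y. Q - adj A ** mpow Y (- a) ** A - adj B ** mpow Y (- b) ** B)"
    by (intro continuous_intros continuous_on_matrix_mult) auto
  moreover have "(\<lambda>Y. Q - adj A ** mpow Y (- a) ** A - adj B ** mpow Y (- b) ** B) \<in> ?K \<rightarrow> ?K"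
    using loewner_interval_self_map[OF hermQ Qge c ab margin] by blast
  ultimately show ?thesis
    using brouwer[OF _ convex_loewner_interval] that by blast
qed

lemma pos_def_lambda_bounds:
  assumes "pos_def Q"
  shows "0 < lambda_min Q" "lambda_min Q \<le> lambda_max Q"
    "\<forall>x. lambda_min Q * (norm x)\<^sup>2 \<le> Re (qform Q x)"
    "\<forall>x. Re (qform Q x) \<le> lambda_max Q * (norm x)\<^sup>2"
proof -
  obtain U d where U: "unitary U" "\<forall>i. d i > 0" "Q = U ** diag_mat d ** adj U"
    using pos_def_unitary_diag[OF assms] by blast
  have \<lambda>: "lambda_max Q = Max (range d)" "lambda_min Q = Min (range d)"
    using eigenvalues_unitary_diag[OF U(1)] U(3) by (simp_all add: lambda_max_def lambda_min_def)
  have bounds: "\<forall>i. lambda_min Q \<le> d i \<and> d i \<le> lambda_max Q" unfolding \<lambda> by simp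
  show "0 < lambda_min Q" using U(2) Min_in[of "range d"] unfolding \<lambda> by auto
  show "lambda_min Q \<le> lambda_max Q" using bounds by (meson order_trans)
  show "\<forall>x. lambda_min Q * (norm x)\<^sup>2 \<le> Re (qform Q x)"
    using qform_ge_of_unitary_diag_ge[OF U(1)] bounds U(3) by auto
  show "\<forall>x. Re (qform Q x) \<le> lambda_max Q * (norm x)\<^sup>2"
    using qform_le_of_unitary_diag_le[OF U(1)] bounds U(3) by auto
qed

lemma fixed_point_margin:
  fixes k k' a b NA NB :: real
  defines "q \<equiv> min a b" and "q' \<equiv> max a b"
  defines "c \<equiv> q * k' / (k * (q + 1))"
  assumes k: "1 \<le> k" "0 < k'" "k' \<le> k" and ab: "0 < a" "0 < b" and N: "0 \<le> NA" "0 \<le> NB"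
    and hyp: "NA + NB < q powr q' * k' powr (q' + 1) / (k powr q' * (q + 1) powr (q' + 1))"
  shows "0 < c" "c \<le> k' - NA * c powr (- a) - NB * c powr (- b)"
proof -
  have q: "0 < q" "q \<le> a" "q \<le> b" "a \<le> q'" "b \<le> q'" using ab by (auto simp: q_def q'_def)
  show c0: "0 < c" using k q unfolding c_def by simp
  have "q * k' \<le> q * k" using k q by (intro mult_left_mono) auto
  also have "\<dots> \<le> k * (q + 1)" using k by (simp add: algebra_simps)
  finally have c1: "c \<le> 1" using k q unfolding c_def by simp
  have "c powr q' = q powr q' * k' powr q' / (k powr q' * (q + 1) powr q')"
    unfolding c_def using k q by (simp add: powr_divide powr_mult)
  then have "q powr q' * k' powr (q' + 1) / (k powr q' * (q + 1) powr (q' + 1)) = k' / (q + 1) * c powr q'"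
    using k q by (simp add: powr_add mult_ac)
  then have "(NA + NB) * c powr (- q') < k' / (q + 1) * c powr q' * c powr (- q')"
    using hyp c0 by (intro mult_strict_right_mono) auto
  also have "\<dots> = k' / (q + 1)" using c0 by (simp add: powr_minus)
  finally have "(NA + NB) * c powr (- q') < k' / (q + 1)" .
  moreover have "NA * c powr (- a) + NB * c powr (- b) \<le> (NA + NB) * c powr (- q')"
    using c0 c1 q N by (simp add: distrib_right add_mono mult_left_mono powr_mono')
  moreover have "c \<le> k' - k' / (q + 1)"
  proof -
    have "c \<le> q * k' / (q + 1)"
      unfolding c_def using k q by (intro divide_left_mono) auto
    also have "\<dots> = k' - k' / (q + 1)" using q by (simp add: field_simps)
    finally show ?thesis .
  qed
  ultimately show "c \<le> k' - NA * c powr (- a) - NB * c powr (- b)" by linarith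
qed

theorem mainTheorem5:
  fixes A B Q :: "complex^'n^'n" and s t p :: real
  assumes "s \<ge> 1" and "t \<ge> 1" and "p \<ge> 1"
    and "invertible A" and "invertible B"
    and "pos_def Q" and "lambda_max Q > 1"
    and "(spec_norm A)\<^sup>2 + (spec_norm B)\<^sup>2 <
       (let k = lambda_max Q; k' = lambda_min Q;
            q = min (t / s) (p / s); q' = max (t / s) (p / s)
        in q powr q' * k' powr (q' + 1) / (k powr q' * (q + 1) powr (q' + 1)))"
  shows "\<exists>X. pos_def X \<and>
     mpow X s + adj A ** mpow X (- t) ** A + adj B ** mpow X (- p) ** B = Q \<and>
     loewner_le
       (((min (t / s) (p / s) * lambda_min Q /
           (lambda_max Q * (min (t / s) (p / s) + 1))) powr (1 / s)) *\<^sub>R mat 1) X \<and>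
     loewner_le X (mpow Q (1 / s))"
proof -
  define c where "c = min (t / s) (p / s) * lambda_min Q / (lambda_max Q * (min (t / s) (p / s) + 1))"
  have s: "0 < s" "0 < 1 / s" "1 / s \<le> 1" using \<open>s \<ge> 1\<close> by auto
  note Q = pos_def_lambda_bounds[OF \<open>pos_def Q\<close>]
  have hermQ: "hermitian Q" using \<open>pos_def Q\<close> by (simp add: pos_def_def)
  have margin: "0 < c"
    "c \<le> lambda_min Q - (spec_norm A)\<^sup>2 * c powr (- (t / s)) - (spec_norm B)\<^sup>2 * c powr (- (p / s))"
    using fixed_point_margin[of "lambda_max Q" "lambda_min Q" "t / s" "p / s" "(spec_norm A)\<^sup>2"
        "(spec_norm B)\<^sup>2"] assms(2,3,7,8) s Q(1,2)
    by (simp_all add: c_def Let_def)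
  obtain Y where Y: "Y \<in> loewner_interval c Q"
    and FY: "Q - adj A ** mpow Y (- (t / s)) ** A - adj B ** mpow Y (- (p / s)) ** B = Y"
    using loewner_interval_fixed_point[OF hermQ Q(3,4) margin(1) _ _ margin(2)] s assms(2,3) by auto
  have posY: "pos_def Y" using pos_def_of_loewner_interval[OF Y margin(1)] .
  define X where "X = mpow Y (1 / s)"
  have "mpow X s + adj A ** mpow X (- t) ** A + adj B ** mpow X (- p) ** B = Q"
    using FY s by (simp add: X_def mpow_mpow posY mpow_one algebra_simps)
  moreover have "loewner_le ((c powr (1 / s)) *\<^sub>R mat 1) X"
    using Re_qform_mpow_ge[OF posY margin(1)] Y s
    by (simp add: loewner_le_iff loewner_interval_def X_def Re_qform_scaleR_id hermitian_diff
        hermitian_scaleR_id mpow_eq_matfun hermitian_matfun posY)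
  moreover have "loewner_le X (mpow Q (1 / s))"
    unfolding X_def
    using loewner_heinz[OF posY \<open>pos_def Q\<close> loewner_le_of_loewner_interval[OF Y hermQ]] s by simp
  ultimately show ?thesis using pos_def_mpow[OF posY] by (auto simp: X_def c_def)
qed

end
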